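(* Let $S$ be a $0$-left cancellative semigroup which is categorical at zero, let $r\in S$, and let $\sigma$ be a maximal string with $\sigma\cap rS\neq\emptyset$. Then $r^{-1}*\sigma=\{t\in S: rt\in\sigma\}$ is a maximal string.
   Context: $S$ has zero $0$; $0$-left cancellative: $st=sr\neq0\Rightarrow t=r$; categorical at zero: $rs\neq0$ and $st\neq0$ imply $rst\neq0$. Let $\tilde S=S\cup\{1\}$ with $1$ an adjoined identity; for $s,t\in S$, $s\mid t$ means $t\in s\tilde S$. A string is a nonempty $\sigma\subseteq S$ such that (i) $0\notin\sigma$; (ii) if $s\mid t$ and $t\in\sigma$ then $s\in\sigma$; (iii) for all $s_1,s_2\in\sigma$ there is $s\in\sigma$ with $s_1\mid s$ and $s_2\mid s$. A string is maximal if it is not properly contained in another string. *)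

theory Defs
  imports Main
begin

text \<open>A semigroup S (the carrier is the whole type 'a, with multiplication of class
semigroup_mult) together with a zero element z.\<close>

definition is_zero :: "'a::semigroup_mult \<Rightarrow> bool" where
  "is_zero z \<longleftrightarrow> (\<forall>s. z * s = z \<and> s * z = z)"

definition zero_left_cancellative :: "'a::semigroup_mult \<Rightarrow> bool" where
  "zero_left_cancellative z \<longleftrightarrow> (\<forall>s t r. s * t = s * r \<and> s * t \<noteq> z \<longrightarrow> t = r)"

definition categorical_at_zero :: "'a::semigroup_mult \<Rightarrow> bool" where
  "categorical_at_zero z \<longleftrightarrow> (\<forall>r s t. r * s \<noteq> z \<and> s * t \<noteq> z \<longrightarrow> r * s * t \<noteq> z)"

text \<open>s divides t: t lies in s S~, with S~ = S with an adjoined identity.\<close>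
definition sdvd :: "'a::semigroup_mult \<Rightarrow> 'a \<Rightarrow> bool" where
  "sdvd s t \<longleftrightarrow> t = s \<or> (\<exists>u. t = s * u)"

definition is_string :: "'a::semigroup_mult \<Rightarrow> 'a set \<Rightarrow> bool" where
  "is_string z \<sigma> \<longleftrightarrow> \<sigma> \<noteq> {} \<and> z \<notin> \<sigma>
     \<and> (\<forall>s t. sdvd s t \<and> t \<in> \<sigma> \<longrightarrow> s \<in> \<sigma>)
     \<and> (\<forall>s1\<in>\<sigma>. \<forall>s2\<in>\<sigma>. \<exists>s\<in>\<sigma>. sdvd s1 s \<and> sdvd s2 s)"

definition is_maximal_string :: "'a::semigroup_mult \<Rightarrow> 'a set \<Rightarrow> bool" where
  "is_maximal_string z \<sigma> \<longleftrightarrow> is_string z \<sigma> \<and> (\<forall>\<tau>. is_string z \<tau> \<and> \<sigma> \<subseteq> \<tau> \<longrightarrow> \<tau> = \<sigma>)"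

end

theory Submission
  imports Defs
begin

text \<open>Left cancellation makes the quotient \<open>r\<inverse>\<sigma> = {t. r t \<in> \<sigma>}\<close> a string. For maximality,
let \<open>\<tau> \<supseteq> r\<inverse>\<sigma>\<close> be a string. Categoricity at zero shows that \<open>r t \<noteq> 0\<close> for all \<open>t \<in> \<tau>\<close>,
so the set of divisors of \<open>r \<tau>\<close> is a string; it contains \<sigma> because \<sigma> is directed and
meets \<open>r S\<close>. Maximality of \<sigma> forces equality, whence \<open>\<tau> \<subseteq> r\<inverse>\<sigma>\<close>.\<close>

lemma sdvd_refl [simp]: "sdvd a a"
  unfolding sdvd_def by simp

lemma sdvd_trans: "sdvd (a::'a::semigroup_mult) b \<Longrightarrow> sdvd b c \<Longrightarrow> sdvd a c"
  unfolding sdvd_def by (metis mult.assoc)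

lemma sdvd_mult_left: "sdvd (a::'a::semigroup_mult) b \<Longrightarrow> sdvd (r * a) (r * b)"
  unfolding sdvd_def by (metis mult.assoc)

lemma sdvd_mult_leftE:
  assumes "sdvd (r * s::'a::semigroup_mult) y"
  obtains t where "y = r * t" and "sdvd s t"
  using assms unfolding sdvd_def by (metis mult.assoc)

lemma sdvd_zero_iff: "is_zero z \<Longrightarrow> sdvd z x \<longleftrightarrow> x = z"
  unfolding sdvd_def is_zero_def by auto

definition left_quotient :: "'a::semigroup_mult \<Rightarrow> 'a set \<Rightarrow> 'a set" where
  "left_quotient r \<sigma> = {t. r * t \<in> \<sigma>}"

definition sdvd_closure :: "'a::semigroup_mult set \<Rightarrow> 'a set" where
  "sdvd_closure A = {x. \<exists>a\<in>A. sdvd x a}"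

lemma string_sdvd_closure:
  fixes A :: "'a::semigroup_mult set"
  assumes "is_zero z" and "A \<noteq> {}" and "z \<notin> A"
    and directed: "\<And>a b. a \<in> A \<Longrightarrow> b \<in> A \<Longrightarrow> \<exists>c\<in>A. sdvd a c \<and> sdvd b c"
  shows "is_string z (sdvd_closure A)"
  unfolding is_string_def
proof (intro conjI allI impI ballI)
  obtain a where "a \<in> A" using \<open>A \<noteq> {}\<close> by blast
  then have "a \<in> sdvd_closure A"
    unfolding sdvd_closure_def using sdvd_refl[of a] by blast
  then show "sdvd_closure A \<noteq> {}" by blast
  show "z \<notin> sdvd_closure A"
    using \<open>z \<notin> A\<close> sdvd_zero_iff[OF \<open>is_zero z\<close>] unfolding sdvd_closure_def by auto
  show "s \<in> sdvd_closure A" if st: "sdvd s t \<and> t \<in> sdvd_closure A" for s t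
  proof -
    obtain a where "a \<in> A" "sdvd t a" using st unfolding sdvd_closure_def by blast
    with st have "sdvd s a" by (blast intro: sdvd_trans)
    with \<open>a \<in> A\<close> show ?thesis unfolding sdvd_closure_def by blast
  qed
next
  fix x y assume "x \<in> sdvd_closure A" and "y \<in> sdvd_closure A"
  then obtain a b where "a \<in> A" "sdvd x a" "b \<in> A" "sdvd y b"
    unfolding sdvd_closure_def by blast
  moreover obtain c where "c \<in> A" "sdvd a c" "sdvd b c"
    using directed[OF \<open>a \<in> A\<close> \<open>b \<in> A\<close>] by blast
  ultimately have "c \<in> A" "sdvd x c" "sdvd y c" by (auto dest: sdvd_trans)
  moreover from \<open>c \<in> A\<close> have "c \<in> sdvd_closure A"
    unfolding sdvd_closure_def using sdvd_refl[of c] by blast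
  ultimately show "\<exists>c\<in>sdvd_closure A. sdvd x c \<and> sdvd y c" by blast
qed

lemma string_left_quotient:
  fixes r :: "'a::semigroup_mult"
  assumes "is_zero z" and "zero_left_cancellative z" and "is_string z \<sigma>"
    and "r * s \<in> \<sigma>"
  shows "is_string z (left_quotient r \<sigma>)"
proof -
  have "z \<notin> \<sigma>" and down: "\<And>s t. sdvd s t \<Longrightarrow> t \<in> \<sigma> \<Longrightarrow> s \<in> \<sigma>"
    and directed: "\<And>a b. a \<in> \<sigma> \<Longrightarrow> b \<in> \<sigma> \<Longrightarrow> \<exists>c\<in>\<sigma>. sdvd a c \<and> sdvd b c"
    using \<open>is_string z \<sigma>\<close> unfolding is_string_def by blast+
  show ?thesis
    unfolding is_string_def
  proof (intro conjI allI impI ballI)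
    show "left_quotient r \<sigma> \<noteq> {}"
      using \<open>r * s \<in> \<sigma>\<close> unfolding left_quotient_def by blast
    show "z \<notin> left_quotient r \<sigma>"
      using \<open>z \<notin> \<sigma>\<close> \<open>is_zero z\<close> unfolding left_quotient_def is_zero_def by simp
    show "s \<in> left_quotient r \<sigma>" if "sdvd s t \<and> t \<in> left_quotient r \<sigma>" for s t
      using that down[OF sdvd_mult_left] unfolding left_quotient_def by blast
  next
    fix a b assume "a \<in> left_quotient r \<sigma>" and "b \<in> left_quotient r \<sigma>"
    then obtain c where c: "c \<in> \<sigma>" "sdvd (r * a) c" "sdvd (r * b) c"
      using directed unfolding left_quotient_def by blast
    obtain t where t: "c = r * t" "sdvd a t" using c(2) by (rule sdvd_mult_leftE)
    obtain t' where t': "c = r * t'" "sdvd b t'" using c(3) by (rule sdvd_mult_leftE)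
    have "t = t'"
      using \<open>zero_left_cancellative z\<close> t(1) t'(1) c(1) \<open>z \<notin> \<sigma>\<close>
      unfolding zero_left_cancellative_def by metis
    then show "\<exists>c\<in>left_quotient r \<sigma>. sdvd a c \<and> sdvd b c"
      using t t' c(1) unfolding left_quotient_def by blast
  qed
qed

text \<open>In a string every two elements have a common multiple inside it, and
categoricity at zero carries \<open>r s \<noteq> 0\<close> from \<open>s\<close> to that multiple and then down to \<open>t\<close>.\<close>

lemma mult_left_nonzero_on_string:
  fixes r :: "'a::semigroup_mult"
  assumes "is_zero z" and "categorical_at_zero z" and "is_string z \<tau>"
    and "s \<in> \<tau>" and "r * s \<noteq> z" and "t \<in> \<tau>"
  shows "r * t \<noteq> z"
proof -
  obtain u where u: "u \<in> \<tau>" "sdvd t u" "sdvd s u"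
    using \<open>is_string z \<tau>\<close> \<open>s \<in> \<tau>\<close> \<open>t \<in> \<tau>\<close> unfolding is_string_def by blast
  have "u \<noteq> z" using u(1) \<open>is_string z \<tau>\<close> unfolding is_string_def by blast
  have "r * u \<noteq> z"
  proof (cases "u = s")
    case False
    then obtain v where "u = s * v" using u(3) unfolding sdvd_def by blast
    then show ?thesis
      using \<open>categorical_at_zero z\<close> \<open>r * s \<noteq> z\<close> \<open>u \<noteq> z\<close>
      unfolding categorical_at_zero_def by (metis mult.assoc)
  qed (use \<open>r * s \<noteq> z\<close> in simp)
  moreover have "sdvd (r * t) (r * u)" using u(2) by (rule sdvd_mult_left)
  ultimately show ?thesis using sdvd_zero_iff[OF \<open>is_zero z\<close>] by blast
qed

lemma string_sdvd_closure_image: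
  fixes r :: "'a::semigroup_mult"
  assumes "is_zero z" and "categorical_at_zero z" and "is_string z \<tau>"
    and "s \<in> \<tau>" and "r * s \<noteq> z"
  shows "is_string z (sdvd_closure ((*) r ` \<tau>))"
proof (rule string_sdvd_closure[OF \<open>is_zero z\<close>])
  show "(*) r ` \<tau> \<noteq> {}" using \<open>s \<in> \<tau>\<close> by blast
  show "z \<notin> (*) r ` \<tau>"
    using mult_left_nonzero_on_string[OF assms] by blast
next
  fix a b assume "a \<in> (*) r ` \<tau>" and "b \<in> (*) r ` \<tau>"
  then obtain t t' where "a = r * t" "b = r * t'" "t \<in> \<tau>" "t' \<in> \<tau>" by blast
  moreover obtain u where "u \<in> \<tau>" "sdvd t u" "sdvd t' u"
    using \<open>is_string z \<tau>\<close> \<open>t \<in> \<tau>\<close> \<open>t' \<in> \<tau>\<close> unfolding is_string_def by blast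
  ultimately show "\<exists>c\<in>(*) r ` \<tau>. sdvd a c \<and> sdvd b c"
    by (blast intro: sdvd_mult_left)
qed

lemma string_subset_sdvd_closure_image:
  fixes r :: "'a::semigroup_mult"
  assumes "is_string z \<sigma>" and "r * s \<in> \<sigma>" and "left_quotient r \<sigma> \<subseteq> \<tau>"
  shows "\<sigma> \<subseteq> sdvd_closure ((*) r ` \<tau>)"
proof
  fix x assume "x \<in> \<sigma>"
  then obtain y where y: "y \<in> \<sigma>" "sdvd x y" "sdvd (r * s) y"
    using \<open>is_string z \<sigma>\<close> \<open>r * s \<in> \<sigma>\<close> unfolding is_string_def by blast
  obtain t where "y = r * t" using y(3) by (rule sdvd_mult_leftE)
  with y assms(3) show "x \<in> sdvd_closure ((*) r ` \<tau>)"
    unfolding sdvd_closure_def left_quotient_def by blast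
qed

theorem proposition10p20:
  fixes z r :: "'a::semigroup_mult" and \<sigma> :: "'a set"
  assumes "is_zero z"
    and "zero_left_cancellative z"
    and "categorical_at_zero z"
    and "is_maximal_string z \<sigma>"
    and "\<sigma> \<inter> {r * s | s. True} \<noteq> {}"
  shows "is_maximal_string z {t. r * t \<in> \<sigma>}"
proof -
  obtain s where s: "r * s \<in> \<sigma>" using assms(5) by blast
  have \<sigma>: "is_string z \<sigma>" "\<And>\<rho>. is_string z \<rho> \<Longrightarrow> \<sigma> \<subseteq> \<rho> \<Longrightarrow> \<rho> = \<sigma>"
    using assms(4) unfolding is_maximal_string_def by auto
  have "\<tau> \<subseteq> left_quotient r \<sigma>"
    if \<tau>: "is_string z \<tau>" "left_quotient r \<sigma> \<subseteq> \<tau>" for \<tau>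
  proof -
    have "s \<in> \<tau>" "r * s \<noteq> z"
      using s \<tau>(2) \<sigma>(1) unfolding left_quotient_def is_string_def by auto
    then have "is_string z (sdvd_closure ((*) r ` \<tau>))"
      by (rule string_sdvd_closure_image[OF assms(1,3) \<tau>(1)])
    then have "sdvd_closure ((*) r ` \<tau>) = \<sigma>"
      using \<sigma> string_subset_sdvd_closure_image[OF \<sigma>(1) s \<tau>(2)] by blast
    then show ?thesis unfolding sdvd_closure_def left_quotient_def by force
  qed
  then show ?thesis
    using string_left_quotient[OF assms(1,2) \<sigma>(1) s]
    unfolding is_maximal_string_def left_quotient_def by blast
qed

end
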